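(* Let $R$ be an integral domain and let $I, J$ be power stable ideals of $R[X]$ such that the ideals $I\cap R$ and $J\cap R$ of $R$ are comaximal. Then $I\cap J$ is power stable.
   Context: An ideal $I$ of the polynomial ring $R[X]$ over an integral domain $R$ is called power stable if $I^t\cap R = (I\cap R)^t$ for all integers $t\geq 1$. *)

theory Defs
  imports "HOL-Computational_Algebra.Polynomial"
begin

definition is_ideal :: "'a::comm_ring_1 set \<Rightarrow> bool" where
  "is_ideal I \<longleftrightarrow> 0 \<in> I \<and> (\<forall>x\<in>I. \<forall>y\<in>I. x + y \<in> I) \<and> (\<forall>r x. x \<in> I \<longrightarrow> r * x \<in> I)"

inductive_set ideal_prod :: "'a::comm_ring_1 set \<Rightarrow> 'a set \<Rightarrow> 'a set" for I J where
  prod: "i \<in> I \<Longrightarrow> j \<in> J \<Longrightarrow> i * j \<in> ideal_prod I J"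
| sum: "s1 \<in> ideal_prod I J \<Longrightarrow> s2 \<in> ideal_prod I J \<Longrightarrow> s1 + s2 \<in> ideal_prod I J"

primrec ideal_pow :: "'a::comm_ring_1 set \<Rightarrow> nat \<Rightarrow> 'a set" where
  "ideal_pow I 0 = UNIV"
| "ideal_pow I (Suc n) = ideal_prod I (ideal_pow I n)"

text \<open>Contraction \<open>I \<inter> R\<close> of an ideal of \<open>R[X]\<close>, identifying \<open>R\<close> with the constant polynomials.\<close>
definition contr :: "'a::comm_ring_1 poly set \<Rightarrow> 'a set" where
  "contr I = {a. [:a:] \<in> I}"

definition power_stable :: "'a::comm_ring_1 poly set \<Rightarrow> bool" where
  "power_stable I \<longleftrightarrow> (\<forall>t::nat. t \<ge> 1 \<longrightarrow> contr (ideal_pow I t) = ideal_pow (contr I) t)"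

definition comaximal :: "'a::comm_ring_1 set \<Rightarrow> 'a set \<Rightarrow> bool" where
  "comaximal A B \<longleftrightarrow> (\<exists>a\<in>A. \<exists>b\<in>B. a + b = 1)"

end

theory Submission
  imports Defs
begin

(* For comaximal ideals A, B of a commutative ring (a + b = 1 with a in A,
   b in B) every power of the intersection splits:  (A \<inter> B)^t = A^t \<inter> B^t.
   Indeed a^t and b^t are again comaximal elements, and for x in A^t \<inter> B^t the
   products a^t x and b^t x already lie in (A \<inter> B)^t, hence so does
   x = u a^t x + v b^t x.
   The theorem follows by applying this splitting twice: in R[X] to I and J (which are
   comaximal because [:a:] + [:b:] = 1), and in R to the contractions I \<inter> R and J \<inter> R;
   in between, contraction commutes with intersections and power stability of I and J
   identifies the contracted powers. *)

lemma ideal_prod_mono: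
  assumes "I \<subseteq> I'" "J \<subseteq> J'" "x \<in> ideal_prod I J"
  shows "x \<in> ideal_prod I' J'"
  using assms(3) by induction (use assms(1,2) in \<open>auto intro: ideal_prod.intros\<close>)

lemma ideal_pow_mono:
  assumes "I \<subseteq> I'"
  shows "ideal_pow I t \<subseteq> ideal_pow I' t"
  by (induction t) (use assms ideal_prod_mono in auto)

lemma ideal_prod_mult:
  assumes "is_ideal I" "x \<in> ideal_prod I J"
  shows "r * x \<in> ideal_prod I J"
  using assms(2)
proof induction
  case (prod i j)
  have "r * i \<in> I" using assms(1) prod(1) unfolding is_ideal_def by blast
  then have "(r * i) * j \<in> ideal_prod I J" using prod(2) by (rule ideal_prod.prod)
  then show ?case by (simp add: mult.assoc)
next
  case (sum s1 s2)
  then show ?case by (simp add: distrib_left ideal_prod.sum)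
qed

lemma is_ideal_pow:
  assumes "is_ideal I"
  shows "is_ideal (ideal_pow I t)"
proof (induction t)
  case 0
  then show ?case by (simp add: is_ideal_def)
next
  case (Suc t)
  have "0 * 0 \<in> ideal_prod I (ideal_pow I t)"
    using assms Suc unfolding is_ideal_def by (blast intro: ideal_prod.prod)
  then show ?case using ideal_prod_mult[OF assms]
    unfolding is_ideal_def by (auto intro: ideal_prod.sum)
qed

lemma is_ideal_Int:
  assumes "is_ideal I" "is_ideal J"
  shows "is_ideal (I \<inter> J)"
  using assms unfolding is_ideal_def by simp

text \<open>If \<open>i \<in> I\<close> and \<open>y \<in> J^t\<close>, then \<open>i^t y \<in> (I \<inter> J)^t\<close>: each of the \<open>t\<close> factors of a
  product generating \<open>J^t\<close> absorbs one copy of \<open>i\<close> and lands in \<open>I \<inter> J\<close>.\<close>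
lemma pow_mult_mem_pow_Int:
  assumes "is_ideal I" "is_ideal J" "i \<in> I" "y \<in> ideal_pow J t"
  shows "i ^ t * y \<in> ideal_pow (I \<inter> J) t"
  using assms(4)
proof (induction t arbitrary: y)
  case 0
  then show ?case by simp
next
  case (Suc t)
  from Suc.prems have "y \<in> ideal_prod J (ideal_pow J t)" by simp
  then show ?case
  proof induction
    case (prod a b)
    have "i * a \<in> I \<inter> J"
      using assms prod(1) unfolding is_ideal_def by (metis IntI mult.commute)
    moreover have "i ^ t * b \<in> ideal_pow (I \<inter> J) t" using Suc.IH prod(2) by blast
    ultimately have "(i * a) * (i ^ t * b) \<in> ideal_prod (I \<inter> J) (ideal_pow (I \<inter> J) t)"
      by (rule ideal_prod.prod)
    moreover have "(i * a) * (i ^ t * b) = i ^ Suc t * (a * b)" by (simp add: ac_simps)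
    ultimately show ?case by simp
  next
    case (sum s1 s2)
    then show ?case by (simp add: distrib_left ideal_prod.sum)
  qed
qed

definition comax :: "'a::comm_ring_1 \<Rightarrow> 'a \<Rightarrow> bool" where
  "comax x y \<longleftrightarrow> (\<exists>u v. x * u + y * v = 1)"

lemma comax_sym: "comax x y \<Longrightarrow> comax y x"
  unfolding comax_def by (auto simp: add.commute)

lemma comax_mult:
  assumes "comax x y" "comax x z"
  shows "comax x (y * z)"
proof -
  obtain u v u' v' where h: "x * u + y * v = 1" "x * u' + z * v' = 1"
    using assms unfolding comax_def by blast
  have "x * (u * (x * u' + z * v') + y * v * u') + (y * z) * (v * v') =
        (x * u + y * v) * (x * u' + z * v')"
    by (simp add: algebra_simps)
  also have "\<dots> = 1" using h by simp
  finally show ?thesis unfolding comax_def by blast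
qed

lemma comax_pow: "comax x y \<Longrightarrow> comax x (y ^ n)"
proof (induction n)
  case 0
  have "x * 0 + y ^ 0 * 1 = 1" by simp
  then show ?case unfolding comax_def by blast
next
  case (Suc n)
  then show ?case using comax_mult[of x y "y ^ n"] by simp
qed

lemma comax_pow_pow: "comax x y \<Longrightarrow> comax (x ^ m) (y ^ n)"
  using comax_pow comax_sym by blast

lemma pow_Int_comaximal:
  fixes I J :: "'a::comm_ring_1 set"
  assumes I: "is_ideal I" and J: "is_ideal J"
    and ij: "i \<in> I" "j \<in> J" "i + j = 1"
  shows "ideal_pow (I \<inter> J) t = ideal_pow I t \<inter> ideal_pow J t"
proof
  show "ideal_pow (I \<inter> J) t \<subseteq> ideal_pow I t \<inter> ideal_pow J t"
    using ideal_pow_mono[of "I \<inter> J" I t] ideal_pow_mono[of "I \<inter> J" J t] by auto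
next
  show "ideal_pow I t \<inter> ideal_pow J t \<subseteq> ideal_pow (I \<inter> J) t"
  proof
    fix x assume x: "x \<in> ideal_pow I t \<inter> ideal_pow J t"
    have "comax i j" using ij(3) unfolding comax_def by (metis mult_1_right)
    then obtain u v where uv: "i ^ t * u + j ^ t * v = 1"
      using comax_pow_pow unfolding comax_def by blast
    let ?P = "ideal_pow (I \<inter> J) t"
    have P: "is_ideal ?P" by (rule is_ideal_pow[OF is_ideal_Int[OF I J]])
    have "i ^ t * x \<in> ?P" using pow_mult_mem_pow_Int[OF I J ij(1)] x by blast
    moreover have "j ^ t * x \<in> ?P"
      using pow_mult_mem_pow_Int[OF J I ij(2)] x by (simp add: Int_commute)
    ultimately have "u * (i ^ t * x) + v * (j ^ t * x) \<in> ?P"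
      using P unfolding is_ideal_def by blast
    moreover have "u * (i ^ t * x) + v * (j ^ t * x) = x"
      using uv by (metis mult.assoc mult.commute distrib_right mult_1_left)
    ultimately show "x \<in> ?P" by simp
  qed
qed

lemma is_ideal_contr:
  assumes I: "is_ideal I"
  shows "is_ideal (contr I)"
  unfolding is_ideal_def contr_def
proof (intro conjI ballI allI impI; simp only: mem_Collect_eq)
  show "[:0:] \<in> I" using I unfolding is_ideal_def by simp
next
  fix x y assume "[:x:] \<in> I" "[:y:] \<in> I"
  then have "[:x:] + [:y:] \<in> I" using I unfolding is_ideal_def by blast
  then show "[:x + y:] \<in> I" by simp
next
  fix r x assume "[:x:] \<in> I"
  then have "[:r:] * [:x:] \<in> I" using I unfolding is_ideal_def by blast
  then show "[:r * x:] \<in> I" by (simp add: mult.commute)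
qed

lemma contr_Int: "contr (I \<inter> J) = contr I \<inter> contr J"
  by (auto simp: contr_def)

lemma comaximal_contrE:
  assumes "comaximal (contr I) (contr J)"
  obtains a b where "a \<in> contr I" "b \<in> contr J" "a + b = 1"
    and "[:a:] \<in> I" "[:b:] \<in> J" "[:a:] + [:b:] = 1"
  using assms unfolding comaximal_def contr_def by (auto simp: one_pCons)

theorem lemma3p1:
  fixes I J :: "'a::idom poly set"
  assumes "is_ideal I" and "is_ideal J"
    and "power_stable I" and "power_stable J"
    and "comaximal (contr I) (contr J)"
  shows "power_stable (I \<inter> J)"
  unfolding power_stable_def
proof (intro allI impI)
  fix t :: nat assume t: "t \<ge> 1"
  obtain a b where ab: "a \<in> contr I" "b \<in> contr J" "a + b = 1"
    and pab: "[:a:] \<in> I" "[:b:] \<in> J" "[:a:] + [:b:] = 1"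
    using assms(5) by (rule comaximal_contrE)
  have "contr (ideal_pow (I \<inter> J) t) = contr (ideal_pow I t \<inter> ideal_pow J t)"
    using pow_Int_comaximal[OF assms(1,2) pab] by simp
  also have "\<dots> = contr (ideal_pow I t) \<inter> contr (ideal_pow J t)"
    by (rule contr_Int)
  also have "\<dots> = ideal_pow (contr I) t \<inter> ideal_pow (contr J) t"
    using assms(3,4) t unfolding power_stable_def by simp
  also have "\<dots> = ideal_pow (contr I \<inter> contr J) t"
    using pow_Int_comaximal[OF is_ideal_contr[OF assms(1)] is_ideal_contr[OF assms(2)] ab]
    by simp
  finally show "contr (ideal_pow (I \<inter> J) t) = ideal_pow (contr (I \<inter> J)) t"
    by (simp add: contr_Int)
qed

end
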